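(* Let $\Omega\subset\mathbb{R}^N$ be a bounded open set, $C>0$, $s\in(0,\tfrac14)$, and let $u\in\mathcal{H}^s_0(\Omega)$ satisfy $\|u\|_s<C$. Then $u\in\mathcal{H}^\sigma_0(\Omega)$ for every $\sigma\in(0,s)$, and there is a constant $C'=C'(C,\Omega)>0$, independent of $s$, $\sigma$ and $u$, such that $$|u|_2^2+\|u\|_\sigma^2<C'\qquad\text{for all }\sigma\in(0,s).$$
   Context: $|u|_q:=(\int_\Omega|u|^q\,dx)^{1/q}$. For $s\in(0,1)$, $\mathcal{H}^s_0(\Omega):=\{u\in H^s(\mathbb{R}^N):u=0\text{ in }\mathbb{R}^N\setminus\Omega\}$ with norm $\|u\|_s$ given by $\|u\|_s^2=\frac{c_{N,s}}{2}\iint\frac{|u(x)-u(y)|^2}{|x-y|^{N+2s}}dx\,dy=\int_{\mathbb{R}^N}|\xi|^{2s}|\widehat u(\xi)|^2d\xi$, where $c_{N,s}:=4^s\pi^{-N/2}s(1-s)\frac{\Gamma(\frac N2+s)}{\Gamma(2-s)}$ and $\widehat u(\xi)=(2\pi)^{-N/2}\int e^{-ix\cdot\xi}u(x)dx$. *)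

theory Defs
  imports "HOL-Analysis.Analysis"
begin

text \<open>R^N is modelled by an arbitrary Euclidean space 'a, N = DIM('a).\<close>

definition cNs :: "nat \<Rightarrow> real \<Rightarrow> real" where
  "cNs N s = 4 powr s * pi powr (- real N / 2) * s * (1 - s)
             * Gamma (real N / 2 + s) / Gamma (2 - s)"

definition gagliardo :: "real \<Rightarrow> ('a::euclidean_space \<Rightarrow> real) \<Rightarrow> ennreal" where
  "gagliardo s u = (\<integral>\<^sup>+ x. \<integral>\<^sup>+ y. ennreal ((u x - u y)\<^sup>2 / norm (x - y) powr (real DIM('a) + 2 * s)) \<partial>lborel \<partial>lborel)"

definition Hs :: "real \<Rightarrow> ('a::euclidean_space \<Rightarrow> real) set" where
  "Hs s = {u. u \<in> borel_measurable lborel \<and> integrable lborel (\<lambda>x. (u x)\<^sup>2)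
              \<and> gagliardo s u < \<infinity>}"

definition Hs0 :: "real \<Rightarrow> 'a set \<Rightarrow> ('a::euclidean_space \<Rightarrow> real) set" where
  "Hs0 s \<Omega> = {u \<in> Hs s. AE x in lborel. x \<notin> \<Omega> \<longrightarrow> u x = 0}"

definition fs_norm_sq :: "real \<Rightarrow> ('a::euclidean_space \<Rightarrow> real) \<Rightarrow> real" where
  "fs_norm_sq s u = cNs DIM('a) s / 2 * enn2real (gagliardo s u)"

definition fs_norm :: "real \<Rightarrow> ('a::euclidean_space \<Rightarrow> real) \<Rightarrow> real" where
  "fs_norm s u = sqrt (fs_norm_sq s u)"

definition L2_sq :: "'a set \<Rightarrow> ('a::euclidean_space \<Rightarrow> real) \<Rightarrow> real" where
  "L2_sq \<Omega> u = (LINT x:\<Omega>|lborel. (u x)\<^sup>2)"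

end

theory Submission
  imports Defs
begin

(*
  Write [u]_s for the Gagliardo double integral and J_p(r) for the integral of |h|^-p over
  |h| >= r.  Decomposing {|h| >= r} into dyadic annuli shows that J_(N+t)(r) is comparable to
  r^-t / t, uniformly for t in (0,1]; together with c_(N,s) ~ s this gives ||u||_s^2 ~ s [u]_s.

  If u vanishes outside Omega, a subset of the ball B_R, then u(y) = 0 whenever |x| < R and
  |x - y| >= 2R, so [u]_s >= J_(N+2s)(2R) |u|_2^2, which is of order |u|_2^2 / s.  Hence |u|_2^2
  is bounded by a multiple of s [u]_s, and so of ||u||_s^2 < C^2, uniformly in s.

  Splitting the Gagliardo integral at |x - y| = 1 and using (a - b)^2 <= 2a^2 + 2b^2 on the far
  part gives [u]_sigma <= [u]_s + 4 J_(N+2 sigma)(1) |u|_2^2, i.e. sigma [u]_sigma is at most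
  s [u]_s plus a multiple of |u|_2^2, and both terms are already bounded.
*)

lemma one_minus_exp_bounds:
  fixes x :: real
  assumes "0 \<le> x" "x \<le> 1"
  shows "x / 2 \<le> 1 - exp (-x)" and "1 - exp (-x) \<le> x"
proof -
  have "exp (-x) \<le> 1 / (1 + x)"
    using exp_ge_add_one_self[of x] assms by (simp add: exp_minus field_simps)
  also have "\<dots> \<le> 1 - x / 2"
    using assms mult_left_mono[of x 1 x] by (simp add: field_simps)
  finally show "x / 2 \<le> 1 - exp (-x)" by simp
  show "1 - exp (-x) \<le> x"
    using exp_ge_add_one_self[of "-x"] by simp
qed

lemma one_minus_two_powr_bounds:
  fixes t :: real
  assumes "0 < t" "t \<le> 1"
  shows "t * ln 2 / 2 \<le> 1 - 2 powr -t" and "1 - 2 powr -t \<le> t * ln 2"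
proof -
  have "0 \<le> t * ln 2" "t * ln 2 \<le> 1"
    using assms ln_2_less_1 by (auto intro: mult_le_one)
  from one_minus_exp_bounds[OF this] show "t * ln 2 / 2 \<le> 1 - 2 powr -t" "1 - 2 powr -t \<le> t * ln 2"
    by (simp_all add: powr_def)
qed

section \<open>Tail integrals of power kernels\<close>

definition tail_kernel :: "real \<Rightarrow> real \<Rightarrow> 'a::real_normed_vector \<Rightarrow> real" where
  "tail_kernel p r h = (if r \<le> norm h then 1 / norm h powr p else 0)"

lemma tail_kernel_nonneg [simp]: "tail_kernel p r h \<ge> 0"
  by (simp add: tail_kernel_def)

lemma tail_kernel_uminus [simp]: "tail_kernel p r (- h) = tail_kernel p r h"
  by (simp add: tail_kernel_def)

lemma tail_kernel_minus_commute: "tail_kernel p r (x - y) = tail_kernel p r (y - x)"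
  by (simp add: tail_kernel_def norm_minus_commute)

lemma borel_measurable_tail_kernel [measurable]:
  "tail_kernel p r \<in> borel_measurable (borel :: 'a::euclidean_space measure)"
  unfolding tail_kernel_def by measurable

definition annulus :: "real \<Rightarrow> 'a::real_normed_vector set" where
  "annulus \<rho> = {h. \<rho> \<le> norm h \<and> norm h < 2 * \<rho>}"

lemma annulus_in_sets_borel [measurable, simp]: "annulus \<rho> \<in> sets (borel :: 'a::euclidean_space measure)"
  unfolding annulus_def by measurable

lemma disjoint_family_dyadic_annuli:
  assumes "r > 0"
  shows "disjoint_family (\<lambda>j. annulus (r * 2 ^ j) :: 'a::real_normed_vector set)"
proof -
  have "annulus (r * 2 ^ i) \<inter> annulus (r * 2 ^ j) = ({} :: 'a set)" if "i < j" for i j :: nat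
  proof -
    have "2 * (r * 2 ^ i) \<le> r * 2 ^ j"
      using assms that by (simp add: power_increasing flip: power_Suc)
    then show ?thesis by (auto simp: annulus_def)
  qed
  then show ?thesis
    unfolding disjoint_family_on_def by (metis Int_commute linorder_neqE_nat)
qed

lemma UN_dyadic_annuli:
  assumes "r > 0"
  shows "(\<Union>j. annulus (r * 2 ^ j)) = {h::'a::real_normed_vector. r \<le> norm h}"
proof (intro equalityI subsetI)
  fix h :: 'a assume "h \<in> (\<Union>j. annulus (r * 2 ^ j))"
  then obtain j :: nat where "r * 2 ^ j \<le> norm h" by (auto simp: annulus_def)
  moreover have "r \<le> r * 2 ^ j" using assms by simp
  ultimately show "h \<in> {h. r \<le> norm h}" by simp
next
  fix h :: 'a assume "h \<in> {h. r \<le> norm h}"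
  then have ge1: "norm h / r \<ge> 1" using assms by simp
  then have "log 2 (norm h / r) \<ge> 0" by simp
  define j where "j = nat \<lfloor>log 2 (norm h / r)\<rfloor>"
  have "real j \<le> log 2 (norm h / r)" "log 2 (norm h / r) < real j + 1"
    using \<open>log 2 (norm h / r) \<ge> 0\<close> unfolding j_def by linarith+
  then have "2 ^ j \<le> norm h / r" "norm h / r < 2 * 2 ^ j"
    using ge1 by (simp_all add: le_log_iff log_less_iff powr_add powr_realpow flip: powr_realpow)
  then show "h \<in> (\<Union>j. annulus (r * 2 ^ j))"
    using assms by (auto simp: annulus_def field_simps)
qed

lemma emeasure_annulus:
  assumes "\<rho> > 0"
  shows "emeasure lborel (annulus \<rho> :: 'a::euclidean_space set)
           = ennreal (unit_ball_vol DIM('a) * (2 ^ DIM('a) - 1) * \<rho> ^ DIM('a))"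
proof -
  have "annulus \<rho> = ball 0 (2 * \<rho>) - ball (0::'a) \<rho>"
    by (auto simp: annulus_def)
  then have "emeasure lborel (annulus \<rho> :: 'a set)
               = emeasure lborel (ball (0::'a) (2 * \<rho>)) - emeasure lborel (ball (0::'a) \<rho>)"
    using assms by (simp only:) (intro emeasure_Diff, simp_all add: subset_ball emeasure_ball)
  also have "\<dots> = ennreal (unit_ball_vol DIM('a) * (2 * \<rho>) ^ DIM('a)) - ennreal (unit_ball_vol DIM('a) * \<rho> ^ DIM('a))"
    using assms by (simp only: emeasure_ball)
  also have "\<dots> = ennreal (unit_ball_vol DIM('a) * (2 * \<rho>) ^ DIM('a) - unit_ball_vol DIM('a) * \<rho> ^ DIM('a))"
    using assms by (intro ennreal_minus) simp
  also have "unit_ball_vol DIM('a) * (2 * \<rho>) ^ DIM('a) - unit_ball_vol DIM('a) * \<rho> ^ DIM('a)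
               = unit_ball_vol DIM('a) * (2 ^ DIM('a) - 1) * \<rho> ^ DIM('a)"
    by (simp add: power_mult_distrib algebra_simps)
  finally show ?thesis .
qed

lemma nn_integral_annulus_bounds:
  fixes p \<rho> :: real
  assumes "\<rho> > 0" "p \<ge> 0"
  shows "ennreal ((2 * \<rho>) powr -p) * emeasure lborel (annulus \<rho> :: 'a set)
           \<le> (\<integral>\<^sup>+h. ennreal (norm (h::'a::euclidean_space) powr -p) * indicator (annulus \<rho>) h \<partial>lborel)"
    and "(\<integral>\<^sup>+h. ennreal (norm (h::'a) powr -p) * indicator (annulus \<rho>) h \<partial>lborel)
           \<le> ennreal (\<rho> powr -p) * emeasure lborel (annulus \<rho> :: 'a set)"
proof -
  have bounds: "(2 * \<rho>) powr -p \<le> norm h powr -p" "norm h powr -p \<le> \<rho> powr -p"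
    if "h \<in> annulus \<rho>" for h :: 'a
    using that assms by (auto simp: annulus_def intro!: powr_mono2')
  have "ennreal ((2 * \<rho>) powr -p) * emeasure lborel (annulus \<rho> :: 'a set)
          = (\<integral>\<^sup>+h. ennreal ((2 * \<rho>) powr -p) * indicator (annulus \<rho>) (h::'a) \<partial>lborel)"
    by (simp add: nn_integral_cmult_indicator)
  also have "\<dots> \<le> (\<integral>\<^sup>+h. ennreal (norm (h::'a) powr -p) * indicator (annulus \<rho>) h \<partial>lborel)"
    using bounds by (intro nn_integral_mono) (auto split: split_indicator intro: ennreal_leI)
  finally show "ennreal ((2 * \<rho>) powr -p) * emeasure lborel (annulus \<rho> :: 'a set) \<le> \<dots>" .
  have "(\<integral>\<^sup>+h. ennreal (norm (h::'a) powr -p) * indicator (annulus \<rho>) h \<partial>lborel)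
          \<le> (\<integral>\<^sup>+h. ennreal (\<rho> powr -p) * indicator (annulus \<rho>) (h::'a) \<partial>lborel)"
    using bounds by (intro nn_integral_mono) (auto split: split_indicator intro: ennreal_leI)
  also have "\<dots> = ennreal (\<rho> powr -p) * emeasure lborel (annulus \<rho> :: 'a set)"
    by (simp add: nn_integral_cmult_indicator)
  finally show "(\<integral>\<^sup>+h. ennreal (norm (h::'a) powr -p) * indicator (annulus \<rho>) h \<partial>lborel) \<le> \<dots>" .
qed

lemma nn_integral_tail_kernel_dyadic:
  assumes "r > 0"
  shows "(\<integral>\<^sup>+h. ennreal (tail_kernel p r (h::'a::euclidean_space)) \<partial>lborel)
           = (\<Sum>j. \<integral>\<^sup>+h. ennreal (norm (h::'a) powr -p) * indicator (annulus (r * 2 ^ j)) h \<partial>lborel)"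
proof -
  have "ennreal (tail_kernel p r h) = (\<Sum>j. ennreal (norm h powr -p) * indicator (annulus (r * 2 ^ j)) h)"
    for h :: 'a
  proof -
    have "(\<Sum>j. ennreal (norm h powr -p) * indicator (annulus (r * 2 ^ j)) h)
            = ennreal (norm h powr -p) * indicator (\<Union>j. annulus (r * 2 ^ j)) h"
      using suminf_indicator[OF disjoint_family_dyadic_annuli[OF assms], of h] by simp
    also have "\<dots> = ennreal (tail_kernel p r h)"
      unfolding UN_dyadic_annuli[OF assms] using assms
      by (auto simp: tail_kernel_def powr_minus_divide)
    finally show ?thesis ..
  qed
  then show ?thesis
    by (simp only:) (rule nn_integral_suminf, measurable)
qed

lemma dyadic_radius_powr:
  fixes r t :: real and N j :: nat
  assumes "r > 0"
  shows "(r * 2 ^ j) powr -(real N + t) * (r * 2 ^ j) ^ N = r powr -t * (2 powr -t) ^ j"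
proof -
  have "(r * 2 ^ j) powr -(real N + t) * (r * 2 ^ j) ^ N = (r * 2 ^ j) powr -t"
    using assms by (simp add: powr_realpow[symmetric] powr_add[symmetric])
  also have "\<dots> = r powr -t * (2 powr -t) ^ j"
    using assms by (simp add: powr_mult powr_realpow[symmetric] powr_powr mult.commute)
  finally show ?thesis .
qed

lemma nn_integral_tail_kernel_bounds:
  fixes r t :: real
  assumes r: "r > 0" and t: "t > 0"
  shows "ennreal (2 powr -(DIM('a) + t) * (unit_ball_vol DIM('a) * (2 ^ DIM('a) - 1) * r powr -t / (1 - 2 powr -t)))
           \<le> (\<integral>\<^sup>+h. ennreal (tail_kernel (DIM('a) + t) r (h::'a::euclidean_space)) \<partial>lborel)"
    and "(\<integral>\<^sup>+h. ennreal (tail_kernel (DIM('a) + t) r (h::'a)) \<partial>lborel)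
           \<le> ennreal (unit_ball_vol DIM('a) * (2 ^ DIM('a) - 1) * r powr -t / (1 - 2 powr -t))"
proof -
  let ?N = "real DIM('a)" and ?p = "real DIM('a) + t"
  define c where "c = unit_ball_vol ?N * (2 ^ DIM('a) - 1) * r powr -t"
  define q :: real where "q = 2 powr -t"
  have q: "0 \<le> q" "q < 1"
    using powr_less_mono[of "-t" 0 "2::real"] t by (auto simp: q_def)
  have c: "c \<ge> 0"
    unfolding c_def by simp
  have "(\<lambda>j. c * q ^ j) sums (c * (1 / (1 - q)))"
    using q by (intro sums_mult geometric_sums) auto
  then have sum_eq: "(\<Sum>j. ennreal (c * q ^ j)) = ennreal (c / (1 - q))"
    using c q by (intro suminf_ennreal_eq) auto
  have term_eq: "ennreal ((r * 2 ^ j) powr -?p) * emeasure lborel (annulus (r * 2 ^ j) :: 'a set)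
                   = ennreal (c * q ^ j)" for j
  proof -
    have "(r * 2 ^ j) powr -?p * (unit_ball_vol ?N * (2 ^ DIM('a) - 1) * (r * 2 ^ j) ^ DIM('a))
            = unit_ball_vol ?N * (2 ^ DIM('a) - 1) * ((r * 2 ^ j) powr -?p * (r * 2 ^ j) ^ DIM('a))"
      by (simp only: mult_ac)
    also have "\<dots> = c * q ^ j"
      unfolding dyadic_radius_powr[OF r] c_def q_def by (simp only: mult_ac)
    finally have "(r * 2 ^ j) powr -?p * (unit_ball_vol ?N * (2 ^ DIM('a) - 1) * (r * 2 ^ j) ^ DIM('a)) = c * q ^ j" .
    then show ?thesis
      using r by (simp add: emeasure_annulus flip: ennreal_mult)
  qed
  have doubled_term_eq: "ennreal ((2 * (r * 2 ^ j)) powr -?p) * emeasure lborel (annulus (r * 2 ^ j) :: 'a set)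
                           = ennreal (2 powr -?p) * ennreal (c * q ^ j)" for j
  proof -
    have "(2 * (r * 2 ^ j)) powr -?p = 2 powr -?p * (r * 2 ^ j) powr -?p"
      using r by (simp add: powr_mult)
    then show ?thesis
      by (simp only: ennreal_mult[OF powr_ge_zero powr_ge_zero] mult.assoc term_eq)
  qed
  have "(\<integral>\<^sup>+h. ennreal (tail_kernel ?p r (h::'a)) \<partial>lborel)
          \<le> (\<Sum>j. ennreal ((r * 2 ^ j) powr -?p) * emeasure lborel (annulus (r * 2 ^ j) :: 'a set))"
    unfolding nn_integral_tail_kernel_dyadic[OF r]
    using r t by (intro suminf_le nn_integral_annulus_bounds(2)) auto
  also have "\<dots> = ennreal (c / (1 - q))"
    by (simp only: term_eq sum_eq)
  finally show "(\<integral>\<^sup>+h. ennreal (tail_kernel ?p r (h::'a)) \<partial>lborel)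
               \<le> ennreal (unit_ball_vol ?N * (2 ^ DIM('a) - 1) * r powr -t / (1 - 2 powr -t))"
    by (simp only: c_def q_def)
  have "ennreal (2 powr -?p * (c / (1 - q))) = ennreal (2 powr -?p) * (\<Sum>j. ennreal (c * q ^ j))"
    unfolding sum_eq using c q by (intro ennreal_mult) auto
  also have "\<dots> = (\<Sum>j. ennreal ((2 * (r * 2 ^ j)) powr -?p) * emeasure lborel (annulus (r * 2 ^ j) :: 'a set))"
    by (simp only: doubled_term_eq ennreal_suminf_cmult)
  also have "\<dots> \<le> (\<integral>\<^sup>+h. ennreal (tail_kernel ?p r (h::'a)) \<partial>lborel)"
    unfolding nn_integral_tail_kernel_dyadic[OF r]
    using r t by (intro suminf_le nn_integral_annulus_bounds(1)) auto
  finally show "ennreal (2 powr -?p * (unit_ball_vol ?N * (2 ^ DIM('a) - 1) * r powr -t / (1 - 2 powr -t)))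
                  \<le> (\<integral>\<^sup>+h. ennreal (tail_kernel ?p r (h::'a)) \<partial>lborel)"
    by (simp only: c_def q_def)
qed

lemma nn_integral_tail_kernel_le_inverse:
  obtains \<kappa> :: real where "\<kappa> > 0"
    and "\<And>t. 0 < t \<Longrightarrow> t \<le> 1 \<Longrightarrow>
           (\<integral>\<^sup>+h. ennreal (tail_kernel (real DIM('a) + t) 1 (h::'a::euclidean_space)) \<partial>lborel) \<le> ennreal (\<kappa> / t)"
proof -
  define V where "V = unit_ball_vol DIM('a) * (2 ^ DIM('a) - 1)"
  have V: "V > 0"
    unfolding V_def using one_less_power[of "2::real" "DIM('a)"] by simp
  have "(\<integral>\<^sup>+h. ennreal (tail_kernel (real DIM('a) + t) 1 (h::'a)) \<partial>lborel) \<le> ennreal (2 * V / ln 2 / t)"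
    if t: "0 < t" "t \<le> 1" for t
  proof -
    have "(\<integral>\<^sup>+h. ennreal (tail_kernel (real DIM('a) + t) 1 (h::'a)) \<partial>lborel) \<le> ennreal (V / (1 - 2 powr -t))"
      using nn_integral_tail_kernel_bounds(2)[of 1 t, where 'a='a] t unfolding V_def by simp
    also have "\<dots> \<le> ennreal (2 * V / ln 2 / t)"
    proof (rule ennreal_leI)
      have "0 < t * ln 2 / 2" "t * ln 2 / 2 \<le> 1 - 2 powr -t"
        using t one_minus_two_powr_bounds(1)[OF t] by auto
      then have "V / (1 - 2 powr -t) \<le> V / (t * ln 2 / 2)"
        using V by (intro divide_left_mono mult_pos_pos) auto
      also have "\<dots> = 2 * V / ln 2 / t"
        by (simp add: field_simps)
      finally show "V / (1 - 2 powr -t) \<le> 2 * V / ln 2 / t" .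
    qed
    finally show ?thesis .
  qed
  moreover have "2 * V / ln 2 > 0"
    using V by simp
  ultimately show ?thesis
    using that by blast
qed

lemma nn_integral_tail_kernel_ge_inverse:
  obtains \<kappa> :: real where "\<kappa> > 0"
    and "\<And>r t. 1 \<le> r \<Longrightarrow> 0 < t \<Longrightarrow> t \<le> 1 \<Longrightarrow>
           ennreal (\<kappa> / (r * t)) \<le> (\<integral>\<^sup>+h. ennreal (tail_kernel (real DIM('a) + t) r (h::'a::euclidean_space)) \<partial>lborel)"
proof -
  define V where "V = unit_ball_vol DIM('a) * (2 ^ DIM('a) - 1)"
  have V: "V > 0"
    unfolding V_def using one_less_power[of "2::real" "DIM('a)"] by simp
  define \<kappa> where "\<kappa> = 2 powr -(real DIM('a) + 1) * V / ln 2"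
  have "ennreal (\<kappa> / (r * t)) \<le> (\<integral>\<^sup>+h. ennreal (tail_kernel (real DIM('a) + t) r (h::'a)) \<partial>lborel)"
    if r: "1 \<le> r" and t: "0 < t" "t \<le> 1" for r t
  proof -
    have "\<kappa> / (r * t) = 2 powr -(real DIM('a) + 1) * V * r powr -1 / (t * ln 2)"
      using r by (simp add: \<kappa>_def powr_minus_divide field_simps)
    also have "\<dots> \<le> 2 powr -(real DIM('a) + t) * V * r powr -t / (1 - 2 powr -t)"
    proof (rule frac_le)
      show "0 \<le> 2 powr -(real DIM('a) + t) * V * r powr -t"
        using V by simp
      show "2 powr -(real DIM('a) + 1) * V * r powr -1 \<le> 2 powr -(real DIM('a) + t) * V * r powr -t"
        using V r t by (intro mult_mono powr_mono) auto
      have "0 < t * ln 2 / 2"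
        using t by simp
      then show "0 < 1 - 2 powr -t"
        using one_minus_two_powr_bounds(1)[OF t] by linarith
      show "1 - 2 powr -t \<le> t * ln 2"
        using one_minus_two_powr_bounds(2)[OF t] .
    qed
    also have "\<dots> = 2 powr -(real DIM('a) + t) * (V * r powr -t / (1 - 2 powr -t))"
      by simp
    finally have "ennreal (\<kappa> / (r * t)) \<le> ennreal (2 powr -(real DIM('a) + t) * (V * r powr -t / (1 - 2 powr -t)))"
      by (rule ennreal_leI)
    also have "\<dots> \<le> (\<integral>\<^sup>+h. ennreal (tail_kernel (real DIM('a) + t) r (h::'a)) \<partial>lborel)"
      unfolding V_def using r t by (intro nn_integral_tail_kernel_bounds(1)) auto
    finally show ?thesis .
  qed
  moreover have "\<kappa> > 0"
    using V by (simp add: \<kappa>_def)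
  ultimately show ?thesis
    using that by blast
qed

lemma nn_integral_tail_kernel_translate:
  fixes x :: "'a::euclidean_space"
  shows "(\<integral>\<^sup>+y. ennreal (tail_kernel p r (x - y)) \<partial>lborel)
     = (\<integral>\<^sup>+h. ennreal (tail_kernel p r (h::'a)) \<partial>lborel)"
proof -
  have "(\<integral>\<^sup>+y. ennreal (tail_kernel p r (x - y)) \<partial>lborel)
          = (\<integral>\<^sup>+y. ennreal (tail_kernel p r (x - y)) \<partial>distr lborel borel ((+) x))"
    by (simp add: lborel_distr_plus)
  also have "\<dots> = (\<integral>\<^sup>+h. ennreal (tail_kernel p r (x - (x + h))) \<partial>lborel)"
    by (rule nn_integral_distr) measurable
  also have "\<dots> = (\<integral>\<^sup>+h. ennreal (tail_kernel p r (h::'a)) \<partial>lborel)"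
    by simp
  finally show ?thesis .
qed

lemma nn_integral_cmult_tail_kernel:
  fixes x y :: "'a::euclidean_space"
  assumes "c \<ge> 0"
  shows "(\<integral>\<^sup>+y. ennreal (c * tail_kernel p r (x - y)) \<partial>lborel)
           = ennreal c * (\<integral>\<^sup>+h. ennreal (tail_kernel p r (h::'a)) \<partial>lborel)"
    and "(\<integral>\<^sup>+x. ennreal (c * tail_kernel p r (x - y)) \<partial>lborel)
           = ennreal c * (\<integral>\<^sup>+h. ennreal (tail_kernel p r (h::'a)) \<partial>lborel)"
proof -
  have translated: "(\<integral>\<^sup>+y. ennreal (c * tail_kernel p r (z - y)) \<partial>lborel)
          = ennreal c * (\<integral>\<^sup>+h. ennreal (tail_kernel p r (h::'a)) \<partial>lborel)" for z :: 'a
  proof -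
    have "(\<integral>\<^sup>+y. ennreal (c * tail_kernel p r (z - y)) \<partial>lborel)
            = (\<integral>\<^sup>+y. ennreal c * ennreal (tail_kernel p r (z - y)) \<partial>lborel)"
      using assms by (simp add: ennreal_mult)
    also have "\<dots> = ennreal c * (\<integral>\<^sup>+y. ennreal (tail_kernel p r (z - y)) \<partial>lborel)"
      by (rule nn_integral_cmult) measurable
    finally show ?thesis
      by (simp only: nn_integral_tail_kernel_translate)
  qed
  from translated[of x] show "(\<integral>\<^sup>+y. ennreal (c * tail_kernel p r (x - y)) \<partial>lborel)
                        = ennreal c * (\<integral>\<^sup>+h. ennreal (tail_kernel p r (h::'a)) \<partial>lborel)" .
  from translated[of y] show "(\<integral>\<^sup>+x. ennreal (c * tail_kernel p r (x - y)) \<partial>lborel)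
                        = ennreal c * (\<integral>\<^sup>+h. ennreal (tail_kernel p r (h::'a)) \<partial>lborel)"
    by (simp only: tail_kernel_minus_commute[of p r _ y])
qed

section \<open>Comparing Gagliardo seminorms\<close>

lemma tail_kernel_mult_L2_le_gagliardo:
  fixes u :: "'a::euclidean_space \<Rightarrow> real"
  assumes [measurable]: "u \<in> borel_measurable lborel"
    and supp: "AE x in lborel. R \<le> norm x \<longrightarrow> u x = 0"
  shows "(\<integral>\<^sup>+h. ennreal (tail_kernel (real DIM('a) + 2 * s) (2 * R) (h::'a)) \<partial>lborel)
           * (\<integral>\<^sup>+x. ennreal ((u x)\<^sup>2) \<partial>lborel) \<le> gagliardo s u"
proof -
  let ?p = "real DIM('a) + 2 * s"
  define J where "J = (\<integral>\<^sup>+h. ennreal (tail_kernel ?p (2 * R) (h::'a)) \<partial>lborel)"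
  have pointwise: "(u x)\<^sup>2 * tail_kernel ?p (2 * R) (x - y) \<le> (u x - u y)\<^sup>2 / norm (x - y) powr ?p"
    if "norm x < R" and "R \<le> norm y \<longrightarrow> u y = 0" for x y
  proof (cases "2 * R \<le> norm (x - y)")
    case True
    then have "R \<le> norm y"
      using that(1) norm_triangle_ineq4[of x y] by linarith
    then show ?thesis
      using that(2) True by (simp add: tail_kernel_def)
  qed (simp add: tail_kernel_def)
  have "J * (\<integral>\<^sup>+x. ennreal ((u x)\<^sup>2) \<partial>lborel) = (\<integral>\<^sup>+x. J * ennreal ((u x)\<^sup>2) \<partial>lborel)"
    by (rule nn_integral_cmult[symmetric]) measurable
  also have "\<dots> \<le> (\<integral>\<^sup>+x. \<integral>\<^sup>+y. ennreal ((u x - u y)\<^sup>2 / norm (x - y) powr ?p) \<partial>lborel \<partial>lborel)"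
  proof (rule nn_integral_mono_AE)
    show "AE x in lborel. J * ennreal ((u x)\<^sup>2)
            \<le> (\<integral>\<^sup>+y. ennreal ((u x - u y)\<^sup>2 / norm (x - y) powr ?p) \<partial>lborel)"
      using supp
    proof eventually_elim
      case (elim x)
      show ?case
      proof (cases "R \<le> norm x")
        case False
        have "J * ennreal ((u x)\<^sup>2) = (\<integral>\<^sup>+y. ennreal ((u x)\<^sup>2 * tail_kernel ?p (2 * R) (x - y)) \<partial>lborel)"
          by (simp add: J_def nn_integral_cmult_tail_kernel(1) mult.commute)
        also have "\<dots> \<le> (\<integral>\<^sup>+y. ennreal ((u x - u y)\<^sup>2 / norm (x - y) powr ?p) \<partial>lborel)"
          using supp False by (intro nn_integral_mono_AE) (auto elim!: eventually_mono intro!: ennreal_leI pointwise)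
        finally show ?thesis .
      qed (use elim in simp)
    qed
  qed
  also have "\<dots> = gagliardo s u"
    unfolding gagliardo_def ..
  finally show ?thesis
    unfolding J_def .
qed

lemma sq_diff_div_powr_le:
  fixes a b p q :: real and h :: "'a::real_normed_vector"
  assumes "0 < p" "p \<le> q"
  shows "(a - b)\<^sup>2 / norm h powr p
           \<le> (a - b)\<^sup>2 / norm h powr q + 2 * a\<^sup>2 * tail_kernel p 1 h + 2 * b\<^sup>2 * tail_kernel p 1 h"
proof (cases "1 \<le> norm h")
  case True
  have "(a - b)\<^sup>2 \<le> 2 * a\<^sup>2 + 2 * b\<^sup>2"
    using zero_le_power2[of "a + b"] unfolding power2_sum power2_diff by linarith
  then have "(a - b)\<^sup>2 / norm h powr p \<le> (2 * a\<^sup>2 + 2 * b\<^sup>2) / norm h powr p"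
    by (intro divide_right_mono) auto
  then have "(a - b)\<^sup>2 / norm h powr p \<le> 2 * a\<^sup>2 * tail_kernel p 1 h + 2 * b\<^sup>2 * tail_kernel p 1 h"
    using True by (simp add: tail_kernel_def add_divide_distrib)
  moreover have "0 \<le> (a - b)\<^sup>2 / norm h powr q"
    by simp
  ultimately show ?thesis
    by linarith
next
  case False
  show ?thesis
  proof (cases "h = 0")
    case h: False
    have "norm h powr q \<le> norm h powr p"
      using False h assms by (intro powr_mono') auto
    then have "(a - b)\<^sup>2 / norm h powr p \<le> (a - b)\<^sup>2 / norm h powr q"
      using h by (intro divide_left_mono) auto
    then show ?thesis
      using False by (simp add: tail_kernel_def)
  qed (simp add: tail_kernel_def)
qed

lemma nn_integral_add3:
  assumes "f \<in> borel_measurable M" "g \<in> borel_measurable M" "h \<in> borel_measurable M"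
  shows "(\<integral>\<^sup>+x. f x + g x + h x \<partial>M) = integral\<^sup>N M f + integral\<^sup>N M g + integral\<^sup>N M h"
  using assms by (simp add: nn_integral_add borel_measurable_add)

lemma gagliardo_le_gagliardo_plus_L2:
  fixes u :: "'a::euclidean_space \<Rightarrow> real"
  assumes [measurable]: "u \<in> borel_measurable lborel" and "0 < \<sigma>" "\<sigma> \<le> s"
  shows "gagliardo \<sigma> u \<le> gagliardo s u
           + 4 * (\<integral>\<^sup>+h. ennreal (tail_kernel (real DIM('a) + 2 * \<sigma>) 1 (h::'a)) \<partial>lborel)
               * (\<integral>\<^sup>+x. ennreal ((u x)\<^sup>2) \<partial>lborel)"
proof -
  let ?p = "real DIM('a) + 2 * \<sigma>" and ?q = "real DIM('a) + 2 * s"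
  define J where "J = (\<integral>\<^sup>+h. ennreal (tail_kernel ?p 1 (h::'a)) \<partial>lborel)"
  define L where "L = (\<integral>\<^sup>+x. ennreal ((u x)\<^sup>2) \<partial>lborel)"
  define F where "F = (\<lambda>x y. ennreal ((u x - u y)\<^sup>2 / norm (x - y) powr ?q))"
  define A where "A = (\<lambda>x y. ennreal (2 * (u x)\<^sup>2 * tail_kernel ?p 1 (x - y)))"
  define B where "B = (\<lambda>x y. ennreal (2 * (u y)\<^sup>2 * tail_kernel ?p 1 (x - y)))"
  have [measurable]: "case_prod F \<in> borel_measurable (lborel \<Otimes>\<^sub>M lborel)"
    unfolding F_def by measurable
  have [measurable]: "case_prod A \<in> borel_measurable (lborel \<Otimes>\<^sub>M lborel)"
    unfolding A_def by measurable
  have [measurable]: "case_prod B \<in> borel_measurable (lborel \<Otimes>\<^sub>M lborel)"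
    unfolding B_def by measurable
  have pointwise: "ennreal ((u x - u y)\<^sup>2 / norm (x - y) powr ?p) \<le> F x y + A x y + B x y" for x y
  proof -
    have "ennreal ((u x - u y)\<^sup>2 / norm (x - y) powr ?p)
            \<le> ennreal ((u x - u y)\<^sup>2 / norm (x - y) powr ?q + 2 * (u x)\<^sup>2 * tail_kernel ?p 1 (x - y)
                       + 2 * (u y)\<^sup>2 * tail_kernel ?p 1 (x - y))"
      using assms(2,3) by (intro ennreal_leI sq_diff_div_powr_le) auto
    then show ?thesis
      by (simp add: F_def A_def B_def ennreal_plus del: ennreal_plus_if)
  qed
  have inner_A: "(\<integral>\<^sup>+y. A x y \<partial>lborel) = 2 * J * ennreal ((u x)\<^sup>2)" for x
  proof -
    have "(\<integral>\<^sup>+y. A x y \<partial>lborel) = ennreal (2 * (u x)\<^sup>2) * J"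
      unfolding A_def J_def by (rule nn_integral_cmult_tail_kernel(1)) simp
    then show ?thesis
      by (simp add: ennreal_mult mult_ac)
  qed
  have inner_B: "(\<integral>\<^sup>+x. B x y \<partial>lborel) = 2 * J * ennreal ((u y)\<^sup>2)" for y
  proof -
    have "(\<integral>\<^sup>+x. B x y \<partial>lborel) = ennreal (2 * (u y)\<^sup>2) * J"
      unfolding B_def J_def by (rule nn_integral_cmult_tail_kernel(2)) simp
    then show ?thesis
      by (simp add: ennreal_mult mult_ac)
  qed
  have "gagliardo \<sigma> u \<le> (\<integral>\<^sup>+x. \<integral>\<^sup>+y. F x y + A x y + B x y \<partial>lborel \<partial>lborel)"
    unfolding gagliardo_def by (intro nn_integral_mono pointwise)
  also have "\<dots> = (\<integral>\<^sup>+x. (\<integral>\<^sup>+y. F x y \<partial>lborel) + (\<integral>\<^sup>+y. A x y \<partial>lborel) + (\<integral>\<^sup>+y. B x y \<partial>lborel) \<partial>lborel)"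
    by (intro nn_integral_cong nn_integral_add3) (unfold F_def A_def B_def, measurable)
  also have "\<dots> = (\<integral>\<^sup>+x. \<integral>\<^sup>+y. F x y \<partial>lborel \<partial>lborel) + (\<integral>\<^sup>+x. \<integral>\<^sup>+y. A x y \<partial>lborel \<partial>lborel)
                  + (\<integral>\<^sup>+x. \<integral>\<^sup>+y. B x y \<partial>lborel \<partial>lborel)"
    by (rule nn_integral_add3) measurable
  also have "(\<integral>\<^sup>+x. \<integral>\<^sup>+y. F x y \<partial>lborel \<partial>lborel) = gagliardo s u"
    unfolding F_def gagliardo_def ..
  also have "(\<integral>\<^sup>+x. \<integral>\<^sup>+y. A x y \<partial>lborel \<partial>lborel) = 2 * J * L"
    unfolding inner_A L_def by (rule nn_integral_cmult) measurable
  also have "(\<integral>\<^sup>+x. \<integral>\<^sup>+y. B x y \<partial>lborel \<partial>lborel) = (\<integral>\<^sup>+y. \<integral>\<^sup>+x. B x y \<partial>lborel \<partial>lborel)"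
    by (rule lborel_pair.Fubini'[symmetric]) measurable
  also have "\<dots> = 2 * J * L"
    unfolding inner_B L_def by (rule nn_integral_cmult) measurable
  finally have "gagliardo \<sigma> u \<le> gagliardo s u + 2 * J * L + 2 * J * L" .
  also have "\<dots> = gagliardo s u + 4 * J * L"
    by (simp add: add.assoc flip: distrib_right)
  finally show ?thesis
    unfolding J_def L_def .
qed

section \<open>Uniform estimates on H^s_0\<close>

lemma cNs_pos:
  assumes "0 < s" "s < 1"
  shows "0 < cNs N s"
  using assms unfolding cNs_def by (intro divide_pos_pos mult_pos_pos Gamma_real_pos) auto

lemma cNs_linear_bounds:
  assumes N: "N \<ge> 1" and S: "0 < S" "S < 1"
  obtains a b where "a > 0" and "b > 0"
    and "\<And>s. 0 < s \<Longrightarrow> s \<le> S \<Longrightarrow> a * s \<le> cNs N s \<and> cNs N s \<le> b * s"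
proof -
  define g where "g s = 4 powr s * pi powr (- real N / 2) * (1 - s) * Gamma (real N / 2 + s) / Gamma (2 - s)"
    for s :: real
  have cNs_eq: "cNs N s = s * g s" for s
    unfolding cNs_def g_def by (simp add: algebra_simps)
  have N2: "real N / 2 \<ge> 1 / 2"
    using N by simp
  have "continuous_on {0..S} g"
  proof (intro continuous_at_imp_continuous_on ballI)
    fix s :: real
    assume s: "s \<in> {0..S}"
    have "real N / 2 + s \<notin> \<int>\<^sub>\<le>\<^sub>0" "2 - s \<notin> \<int>\<^sub>\<le>\<^sub>0"
      using s S N2 by (auto dest: nonpos_Ints_nonpos)
    moreover have "Gamma (2 - s) > 0"
      using s S by (intro Gamma_real_pos) auto
    ultimately show "isCont g s"
      unfolding g_def by (intro continuous_intros) (auto simp del: Gamma_real_pos)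
  qed
  moreover have g_pos: "g s > 0" if "s \<in> {0..S}" for s
    using that S N2 unfolding g_def by (intro divide_pos_pos mult_pos_pos Gamma_real_pos) auto
  ultimately obtain s1 s2 where "s1 \<in> {0..S}" "s2 \<in> {0..S}"
    and "\<forall>y\<in>{0..S}. g s1 \<le> g y" "\<forall>y\<in>{0..S}. g y \<le> g s2"
    using continuous_attains_inf[of "{0..S}" g] continuous_attains_sup[of "{0..S}" g] S by auto
  moreover have "g s1 * s \<le> cNs N s \<and> cNs N s \<le> g s2 * s"
    if "0 < s" "s \<le> S" for s
    using that calculation unfolding cNs_eq by (auto simp: mult.commute intro: mult_left_mono)
  ultimately show ?thesis
    using that g_pos by blast
qed

lemma fs_norm_sq_comparable:
  obtains a b where "a > 0" and "b > 0"
    and "\<And>s u. 0 < s \<Longrightarrow> s \<le> 1/2 \<Longrightarrow>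
           a * (s * enn2real (gagliardo s u)) \<le> (fs_norm s u)\<^sup>2
           \<and> (fs_norm s u)\<^sup>2 \<le> b * (s * enn2real (gagliardo s (u :: 'a::euclidean_space \<Rightarrow> real)))"
proof -
  have N: "DIM('a) \<ge> 1"
    by (simp add: Suc_leI)
  obtain a b where a: "a > 0" and b: "b > 0"
    and ab: "\<And>s. 0 < s \<Longrightarrow> s \<le> 1/2 \<Longrightarrow> a * s \<le> cNs DIM('a) s \<and> cNs DIM('a) s \<le> b * s"
    by (rule cNs_linear_bounds[OF N, of "1/2"]) auto
  have "a / 2 * (s * enn2real (gagliardo s u)) \<le> (fs_norm s u)\<^sup>2
          \<and> (fs_norm s u)\<^sup>2 \<le> b / 2 * (s * enn2real (gagliardo s (u :: 'a \<Rightarrow> real)))"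
    if "0 < s" "s \<le> 1/2" for s u
  proof -
    define G where "G = enn2real (gagliardo s u)"
    have "(fs_norm s u)\<^sup>2 = cNs DIM('a) s * G / 2"
      using cNs_pos[of s "DIM('a)"] that by (simp add: fs_norm_def fs_norm_sq_def G_def)
    moreover have "a * s * G \<le> cNs DIM('a) s * G" "cNs DIM('a) s * G \<le> b * s * G"
      using ab[OF that] by (auto simp: G_def intro: mult_right_mono)
    ultimately show ?thesis
      unfolding G_def[symmetric] by (simp add: field_simps)
  qed
  moreover have "a / 2 > 0" "b / 2 > 0"
    using a b by simp_all
  ultimately show ?thesis
    using that by blast
qed

lemma L2_sq_eq_integral:
  assumes "u \<in> Hs0 s \<Omega>" and "\<Omega> \<in> sets lborel"
  shows "L2_sq \<Omega> u = (LINT x|lborel. (u x)\<^sup>2)"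
  unfolding L2_sq_def set_lebesgue_integral_def
proof (rule integral_cong_AE)
  have [measurable]: "u \<in> borel_measurable lborel" "\<Omega> \<in> sets borel"
    using assms by (auto simp: Hs0_def Hs_def)
  show "(\<lambda>x. indicator \<Omega> x *\<^sub>R (u x)\<^sup>2) \<in> borel_measurable lborel"
    by measurable
  show "(\<lambda>x. (u x)\<^sup>2) \<in> borel_measurable lborel"
    by measurable
  show "AE x in lborel. indicator \<Omega> x *\<^sub>R (u x)\<^sup>2 = (u x)\<^sup>2"
    using assms(1) unfolding Hs0_def by (auto elim!: eventually_mono simp: indicator_def)
qed

lemma nn_integral_sq_eq_L2_sq:
  assumes "u \<in> Hs0 s \<Omega>" and "\<Omega> \<in> sets lborel"
  shows "(\<integral>\<^sup>+x. ennreal ((u x)\<^sup>2) \<partial>lborel) = ennreal (L2_sq \<Omega> u)"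
  using assms L2_sq_eq_integral[OF assms] by (simp add: nn_integral_eq_integral Hs0_def Hs_def)

lemma L2_sq_nonneg:
  assumes "u \<in> Hs0 s \<Omega>" and "\<Omega> \<in> sets lborel"
  shows "0 \<le> L2_sq \<Omega> u"
  using assms by (simp add: L2_sq_eq_integral)

lemma L2_sq_le_s_gagliardo:
  fixes \<Omega> :: "'a::euclidean_space set"
  assumes "bounded \<Omega>" and \<Omega>: "\<Omega> \<in> sets lborel"
  obtains \<kappa> where "\<kappa> > 0"
    and "\<And>s u. 0 < s \<Longrightarrow> s \<le> 1/2 \<Longrightarrow> u \<in> Hs0 s \<Omega> \<Longrightarrow> \<kappa> * L2_sq \<Omega> u \<le> s * enn2real (gagliardo s u)"
proof -
  obtain R0 where "\<Omega> \<subseteq> ball 0 R0"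
    using bounded_subset_ballD[OF assms(1)] by blast
  then have "1 \<le> max R0 1" "\<Omega> \<subseteq> ball 0 (max R0 1)"
    by (auto simp: subset_eq)
  then obtain R where R: "R \<ge> 1" "\<Omega> \<subseteq> ball 0 R"
    by blast
  obtain \<kappa> where \<kappa>: "\<kappa> > 0"
    and tail_ge: "\<And>r t. 1 \<le> r \<Longrightarrow> 0 < t \<Longrightarrow> t \<le> 1 \<Longrightarrow>
           ennreal (\<kappa> / (r * t)) \<le> (\<integral>\<^sup>+h. ennreal (tail_kernel (real DIM('a) + t) r (h::'a)) \<partial>lborel)"
    using nn_integral_tail_kernel_ge_inverse[where 'a='a] by blast
  have "\<kappa> / (4 * R) * L2_sq \<Omega> u \<le> s * enn2real (gagliardo s u)"
    if s: "0 < s" "s \<le> 1/2" and u: "u \<in> Hs0 s \<Omega>" for s u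
  proof -
    have [measurable]: "u \<in> borel_measurable lborel" and fin: "gagliardo s u < \<infinity>"
      and zero: "AE x in lborel. x \<notin> \<Omega> \<longrightarrow> u x = 0"
      using u by (auto simp: Hs0_def Hs_def)
    have supp: "AE x in lborel. R \<le> norm x \<longrightarrow> u x = 0"
      using zero by eventually_elim (use R(2) in auto)
    define L where "L = L2_sq \<Omega> u"
    have L: "0 \<le> L"
      unfolding L_def using u \<Omega> by (rule L2_sq_nonneg)
    have "ennreal (\<kappa> / (2 * R * (2 * s)) * L) = ennreal (\<kappa> / (2 * R * (2 * s))) * ennreal L"
      using \<kappa> R s L by (intro ennreal_mult) auto
    also have "\<dots> \<le> (\<integral>\<^sup>+h. ennreal (tail_kernel (real DIM('a) + 2 * s) (2 * R) (h::'a)) \<partial>lborel)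
                     * (\<integral>\<^sup>+x. ennreal ((u x)\<^sup>2) \<partial>lborel)"
      unfolding L_def nn_integral_sq_eq_L2_sq[OF u \<Omega>] using R s by (intro mult_right_mono tail_ge) auto
    also have "\<dots> \<le> gagliardo s u"
      using supp by (rule tail_kernel_mult_L2_le_gagliardo[rotated]) measurable
    also have "\<dots> = ennreal (enn2real (gagliardo s u))"
      using fin by simp
    finally have "\<kappa> / (2 * R * (2 * s)) * L \<le> enn2real (gagliardo s u)"
      by (simp add: ennreal_le_iff)
    then have "s * (\<kappa> / (2 * R * (2 * s)) * L) \<le> s * enn2real (gagliardo s u)"
      using s by (intro mult_left_mono) auto
    then show ?thesis
      using s unfolding L_def by (simp add: field_simps)
  qed
  moreover have "\<kappa> / (4 * R) > 0"
    using \<kappa> R by simp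
  ultimately show ?thesis
    using that by blast
qed

lemma Hs0_lower_exponent_bound:
  fixes \<Omega> :: "'a::euclidean_space set"
  assumes \<Omega>: "\<Omega> \<in> sets lborel"
  obtains \<kappa> where "\<kappa> > 0"
    and "\<And>\<sigma> s u. 0 < \<sigma> \<Longrightarrow> \<sigma> \<le> s \<Longrightarrow> \<sigma> \<le> 1/2 \<Longrightarrow> u \<in> Hs0 s \<Omega> \<Longrightarrow>
           u \<in> Hs0 \<sigma> \<Omega> \<and>
           \<sigma> * enn2real (gagliardo \<sigma> u) \<le> s * enn2real (gagliardo s u) + \<kappa> * L2_sq \<Omega> u"
proof -
  obtain \<kappa> where \<kappa>: "\<kappa> > 0"
    and tail_le: "\<And>t. 0 < t \<Longrightarrow> t \<le> 1 \<Longrightarrow>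
           (\<integral>\<^sup>+h. ennreal (tail_kernel (real DIM('a) + t) 1 (h::'a)) \<partial>lborel) \<le> ennreal (\<kappa> / t)"
    using nn_integral_tail_kernel_le_inverse[where 'a='a] by blast
  have "u \<in> Hs0 \<sigma> \<Omega> \<and>
          \<sigma> * enn2real (gagliardo \<sigma> u) \<le> s * enn2real (gagliardo s u) + 2 * \<kappa> * L2_sq \<Omega> u"
    if \<sigma>: "0 < \<sigma>" "\<sigma> \<le> s" "\<sigma> \<le> 1/2" and u: "u \<in> Hs0 s \<Omega>" for \<sigma> s u
  proof -
    have [measurable]: "u \<in> borel_measurable lborel" and fin: "gagliardo s u < \<infinity>"
      using u by (auto simp: Hs0_def Hs_def)
    define G where "G = enn2real (gagliardo s u)"
    define L where "L = L2_sq \<Omega> u"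
    have G: "gagliardo s u = ennreal G" "0 \<le> G"
      using fin by (auto simp: G_def)
    have L: "0 \<le> L"
      unfolding L_def using u \<Omega> by (rule L2_sq_nonneg)
    define k where "k = \<kappa> / (2 * \<sigma>)"
    have k: "0 \<le> k"
      using \<kappa> \<sigma> by (simp add: k_def)
    have "gagliardo \<sigma> u \<le> gagliardo s u
            + 4 * (\<integral>\<^sup>+h. ennreal (tail_kernel (real DIM('a) + 2 * \<sigma>) 1 (h::'a)) \<partial>lborel)
                * (\<integral>\<^sup>+x. ennreal ((u x)\<^sup>2) \<partial>lborel)"
      using \<sigma> by (intro gagliardo_le_gagliardo_plus_L2) auto
    also have "\<dots> \<le> ennreal G + 4 * ennreal k * ennreal L"
      unfolding G(1) L_def k_def nn_integral_sq_eq_L2_sq[OF u \<Omega>]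
      using \<sigma> by (intro add_left_mono mult_right_mono mult_left_mono tail_le) auto
    also have "\<dots> = ennreal (G + 4 * k * L)"
      using G(2) L k by (simp add: ennreal_plus ennreal_mult del: ennreal_plus_if)
    finally have G\<sigma>: "gagliardo \<sigma> u \<le> ennreal (G + 4 * k * L)" .
    then have "gagliardo \<sigma> u < \<infinity>"
      by (rule le_less_trans) simp
    then have "u \<in> Hs0 \<sigma> \<Omega>"
      using u by (auto simp: Hs0_def Hs_def)
    have "0 \<le> G + 4 * k * L"
      using G(2) L k by simp
    then have "enn2real (gagliardo \<sigma> u) \<le> G + 4 * k * L"
      using enn2real_mono[OF G\<sigma> ennreal_less_top] by (simp only: enn2real_ennreal)
    then have "\<sigma> * enn2real (gagliardo \<sigma> u) \<le> \<sigma> * (G + 4 * k * L)"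
      using \<sigma> by (intro mult_left_mono) auto
    also have "\<dots> = \<sigma> * G + 2 * \<kappa> * L"
      using \<sigma> by (simp add: k_def field_simps)
    also have "\<dots> \<le> s * G + 2 * \<kappa> * L"
      using \<sigma> G(2) by (simp add: mult_right_mono)
    finally show ?thesis
      using \<open>u \<in> Hs0 \<sigma> \<Omega>\<close> unfolding G_def L_def by simp
  qed
  moreover have "2 * \<kappa> > 0"
    using \<kappa> by simp
  ultimately show ?thesis
    using that by blast
qed

theorem lemma3p6:
  fixes \<Omega> :: "'a::euclidean_space set" and C :: real
  assumes "bounded \<Omega>" and "open \<Omega>" and "C > 0"
  shows "\<exists>C' > 0. \<forall>s u. 0 < s \<and> s < 1/4 \<and> u \<in> Hs0 s \<Omega> \<and> fs_norm s u < C \<longrightarrow>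
            (\<forall>\<sigma>. 0 < \<sigma> \<and> \<sigma> < s \<longrightarrow>
               u \<in> Hs0 \<sigma> \<Omega> \<and> L2_sq \<Omega> u + (fs_norm \<sigma> u)\<^sup>2 < C')"
proof -
  have \<Omega>: "\<Omega> \<in> sets lborel"
    using assms(2) by simp
  obtain a b where a: "a > 0" and b: "b > 0"
    and norm_sq: "\<And>s u. 0 < s \<Longrightarrow> s \<le> 1/2 \<Longrightarrow>
           a * (s * enn2real (gagliardo s u)) \<le> (fs_norm s u)\<^sup>2
           \<and> (fs_norm s u)\<^sup>2 \<le> b * (s * enn2real (gagliardo s (u :: 'a \<Rightarrow> real)))"
    using fs_norm_sq_comparable[where 'a='a] by blast
  obtain \<kappa>\<^sub>1 where \<kappa>\<^sub>1: "\<kappa>\<^sub>1 > 0"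
    and L2_le: "\<And>s u. 0 < s \<Longrightarrow> s \<le> 1/2 \<Longrightarrow> u \<in> Hs0 s \<Omega> \<Longrightarrow>
           \<kappa>\<^sub>1 * L2_sq \<Omega> u \<le> s * enn2real (gagliardo s u)"
    using L2_sq_le_s_gagliardo[OF assms(1) \<Omega>] by blast
  obtain \<kappa>\<^sub>2 where \<kappa>\<^sub>2: "\<kappa>\<^sub>2 > 0"
    and lower: "\<And>\<sigma> s u. 0 < \<sigma> \<Longrightarrow> \<sigma> \<le> s \<Longrightarrow> \<sigma> \<le> 1/2 \<Longrightarrow> u \<in> Hs0 s \<Omega> \<Longrightarrow>
           u \<in> Hs0 \<sigma> \<Omega> \<and>
           \<sigma> * enn2real (gagliardo \<sigma> u) \<le> s * enn2real (gagliardo s u) + \<kappa>\<^sub>2 * L2_sq \<Omega> u"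
    using Hs0_lower_exponent_bound[OF \<Omega>] by blast
  define B where "B = C\<^sup>2 / a"
  have B: "B > 0"
    using a assms(3) by (simp add: B_def)
  show ?thesis
  proof (intro exI[of _ "B / \<kappa>\<^sub>1 + b * (B + \<kappa>\<^sub>2 * (B / \<kappa>\<^sub>1))"] conjI allI impI)
    show "0 < B / \<kappa>\<^sub>1 + b * (B + \<kappa>\<^sub>2 * (B / \<kappa>\<^sub>1))"
      using B b \<kappa>\<^sub>1 \<kappa>\<^sub>2 by (intro add_pos_pos mult_pos_pos divide_pos_pos) auto
    fix s \<sigma> :: real and u
    assume H: "0 < s \<and> s < 1/4 \<and> u \<in> Hs0 s \<Omega> \<and> fs_norm s u < C" and \<sigma>: "0 < \<sigma> \<and> \<sigma> < s"
    then have s: "0 < s" "s \<le> 1/2" and u: "u \<in> Hs0 s \<Omega>"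
      by auto
    have "0 \<le> fs_norm s u"
      using cNs_pos[of s "DIM('a)"] s by (simp add: fs_norm_def fs_norm_sq_def)
    then have "(fs_norm s u)\<^sup>2 < C\<^sup>2"
      using H by (intro power_strict_mono) auto
    then have "a * (s * enn2real (gagliardo s u)) < C\<^sup>2"
      using conjunct1[OF norm_sq[OF s, of u]] by linarith
    then have sG: "s * enn2real (gagliardo s u) < B"
      using a by (simp add: B_def field_simps)
    have L2: "L2_sq \<Omega> u < B / \<kappa>\<^sub>1"
      using L2_le[OF s u] sG \<kappa>\<^sub>1 by (simp add: field_simps)
    have "\<sigma> \<le> s" "\<sigma> \<le> 1/2"
      using \<sigma> s by auto
    note lower_\<sigma> = lower[OF conjunct1[OF \<sigma>] this u]
    have "(fs_norm \<sigma> u)\<^sup>2 \<le> b * (\<sigma> * enn2real (gagliardo \<sigma> u))"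
      using norm_sq[of \<sigma> u] \<sigma> s by auto
    also have "\<dots> \<le> b * (s * enn2real (gagliardo s u) + \<kappa>\<^sub>2 * L2_sq \<Omega> u)"
      using lower_\<sigma> b by (intro mult_left_mono) auto
    also have "\<dots> < b * (B + \<kappa>\<^sub>2 * (B / \<kappa>\<^sub>1))"
      using sG L2 b \<kappa>\<^sub>2 by (intro mult_strict_left_mono add_strict_mono) auto
    finally show "L2_sq \<Omega> u + (fs_norm \<sigma> u)\<^sup>2 < B / \<kappa>\<^sub>1 + b * (B + \<kappa>\<^sub>2 * (B / \<kappa>\<^sub>1))"
      using L2 by linarith
    show "u \<in> Hs0 \<sigma> \<Omega>"
      using lower_\<sigma> by blast
  qed
qed

end
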